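(* If $R$ is a finite commutative ring, then the set of all free cyclic submodules of $R^2$ equals the projective line $\mathbb{P}(R)$.
   Context: $R^2$ is the free $R$-module of pairs; $R(a,b)=\{(\alpha a,\alpha b):\alpha\in R\}$ is free if $r(a,b)=(0,0)$ implies $r=0$. A pair $(a,b)$ is admissible if there exist $c,d\in R$ with $\begin{pmatrix}a&b\\c&d\end{pmatrix}\in GL_2(R)$. The projective line is $\mathbb{P}(R)=\{R(a,b): (a,b)\in R^2 \text{ admissible}\}$, equivalently the orbit of $R(1,0)$ under the right action of $GL_2(R)$. *)

theory Defs
  imports Main
begin

definition cyclic_submodule :: "'a::comm_ring_1 \<times> 'a \<Rightarrow> ('a \<times> 'a) set" where
  "cyclic_submodule p = {(\<alpha> * fst p, \<alpha> * snd p) | \<alpha>. True}"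

definition free_pair :: "'a::comm_ring_1 \<times> 'a \<Rightarrow> bool" where
  "free_pair p \<longleftrightarrow> (\<forall>r. (r * fst p, r * snd p) = (0, 0) \<longrightarrow> r = 0)"

definition in_GL2 :: "'a::comm_ring_1 \<Rightarrow> 'a \<Rightarrow> 'a \<Rightarrow> 'a \<Rightarrow> bool" where
  "in_GL2 a b c d \<longleftrightarrow> (\<exists>a' b' c' d'.
      a * a' + b * c' = 1 \<and> a * b' + b * d' = 0 \<and> c * a' + d * c' = 0 \<and> c * b' + d * d' = 1 \<and>
      a' * a + b' * c = 1 \<and> a' * b + b' * d = 0 \<and> c' * a + d' * c = 0 \<and> c' * b + d' * d = 1)"

definition admissible :: "'a::comm_ring_1 \<times> 'a \<Rightarrow> bool" where
  "admissible p \<longleftrightarrow> (\<exists>c d. in_GL2 (fst p) (snd p) c d)"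

definition free_cyclic_submodules :: "('a::comm_ring_1 \<times> 'a) set set" where
  "free_cyclic_submodules = {cyclic_submodule p | p. free_pair p}"

definition projective_line :: "('a::comm_ring_1 \<times> 'a) set set" where
  "projective_line = {cyclic_submodule p | p. admissible p}"

end

theory Submission
  imports Defs
begin

text \<open>
  Over any commutative ring a pair (a, b) is admissible iff it is unimodular, i.e. a u + b v = 1
  for some u, v; unimodular pairs are clearly free. Conversely, in a finite ring some powers
  e = a^n and f = b^m are idempotent, and g = (1 - e)(1 - f) is an idempotent on which a and b
  act nilpotently. If g were nonzero, multiplying it by suitable powers of a and of b would give
  a nonzero element annihilating both a and b, contradicting freeness. Hence g = 0, that is
  1 = e + f (1 - e), which exhibits (a, b) as unimodular.
\<close>

lemma power_periodic:
  fixes x :: "'a::monoid_mult"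
  assumes period: "x ^ a = x ^ (a + p)" and "a \<le> m"
  shows "x ^ (m + t * p) = x ^ m"
proof (induction t)
  case 0
  then show ?case by simp
next
  case (Suc t)
  have shift: "x ^ (m + p) = x ^ m"
    using period \<open>a \<le> m\<close> power_add[of x "m - a"] by (metis add.assoc le_add_diff_inverse2)
  have "x ^ (m + Suc t * p) = x ^ (m + p) * x ^ (t * p)"
    by (simp add: power_add[symmetric] algebra_simps)
  also have "\<dots> = x ^ m * x ^ (t * p)"
    by (simp only: shift)
  also have "\<dots> = x ^ (m + t * p)"
    by (simp add: power_add)
  finally show ?case using Suc by simp
qed

lemma idempotent_power_exists:
  fixes x :: "'a::{monoid_mult, finite}"
  obtains n where "n \<ge> 1" and "x ^ n * x ^ n = x ^ n"
proof -
  have "\<not> inj (\<lambda>k. x ^ Suc k)"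
    using inj_on_finite[of "\<lambda>k. x ^ Suc k" UNIV UNIV] by auto
  then obtain i j where "i < j" and eq: "x ^ Suc i = x ^ Suc j"
    unfolding inj_def by (metis linorder_neqE_nat)
  define a p where "a = Suc i" and "p = j - i"
  have period: "x ^ a = x ^ (a + p)" and "p \<ge> 1"
    using eq \<open>i < j\<close> by (simp_all add: a_def p_def)
  have "x ^ (a * p + a * p) = x ^ (a * p)"
    using power_periodic[OF period, of "a * p" a] \<open>p \<ge> 1\<close> by (simp add: mult.commute)
  then have "x ^ (a * p) * x ^ (a * p) = x ^ (a * p)"
    by (simp only: power_add)
  moreover have "a * p \<ge> 1"
    using \<open>p \<ge> 1\<close> by (simp add: a_def)
  ultimately show ?thesis
    using that by blast
qed

lemma last_nonzero_power_multiple: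
  fixes r x :: "'a::semiring_1"
  assumes "r \<noteq> 0" and "r * x ^ n = 0"
  obtains i where "r * x ^ i \<noteq> 0" and "r * x ^ Suc i = 0"
  using assms
proof (induction n)
  case 0
  then show ?case by simp
next
  case (Suc n)
  then show ?case by (cases "r * x ^ n = 0") auto
qed

lemma common_annihilator_of_nilpotent_pair:
  fixes r a b :: "'a::comm_semiring_1"
  assumes "r \<noteq> 0" and "r * a ^ n = 0" and "r * b ^ m = 0"
  obtains s where "s \<noteq> 0" and "s * a = 0" and "s * b = 0"
proof -
  obtain i where i: "r * a ^ i \<noteq> 0" "r * a ^ Suc i = 0"
    using last_nonzero_power_multiple assms(1,2) by blast
  have "(r * a ^ i) * b ^ m = a ^ i * (r * b ^ m)"
    by (simp add: ac_simps)
  then have "(r * a ^ i) * b ^ m = 0"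
    using assms(3) by simp
  then obtain j where j: "r * a ^ i * b ^ j \<noteq> 0" "r * a ^ i * b ^ Suc j = 0"
    using last_nonzero_power_multiple i(1) by blast
  have "(r * a ^ i * b ^ j) * a = b ^ j * (r * a ^ Suc i)"
    by (simp add: algebra_simps)
  also have "\<dots> = 0"
    using i(2) by simp
  finally have "(r * a ^ i * b ^ j) * a = 0" .
  moreover have "(r * a ^ i * b ^ j) * b = 0"
    using j(2) by (simp add: ac_simps)
  ultimately show ?thesis
    using that j(1) by blast
qed

lemma faithful_pair_unimodular:
  fixes a b :: "'a::{comm_ring_1, finite}"
  assumes faithful: "\<And>r. r * a = 0 \<Longrightarrow> r * b = 0 \<Longrightarrow> r = 0"
  shows "\<exists>u v. a * u + b * v = 1"
proof -
  obtain n where "n \<ge> 1" and idem_e: "a ^ n * a ^ n = a ^ n"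
    using idempotent_power_exists by blast
  obtain m where "m \<ge> 1" and idem_f: "b ^ m * b ^ m = b ^ m"
    using idempotent_power_exists by blast
  define e f where "e = a ^ n" and "f = b ^ m"
  define g where "g = (1 - e) * (1 - f)"
  have "g * a ^ n = (1 - f) * (e - e * e)"
    by (simp add: g_def e_def algebra_simps)
  then have ga: "g * a ^ n = 0"
    using idem_e by (simp add: e_def)
  have "g * b ^ m = (1 - e) * (f - f * f)"
    by (simp add: g_def f_def algebra_simps)
  then have gb: "g * b ^ m = 0"
    using idem_f by (simp add: f_def)
  have "g = 0"
    using common_annihilator_of_nilpotent_pair[of g a n b m] ga gb faithful by blast
  then have "1 = e + f * (1 - e)"
    by (simp add: g_def algebra_simps)
  moreover have "e = a * a ^ (n - 1)" and "f = b * b ^ (m - 1)"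
    using \<open>n \<ge> 1\<close> \<open>m \<ge> 1\<close> by (simp_all add: e_def f_def power_Suc[symmetric])
  ultimately have "a * a ^ (n - 1) + b * (b ^ (m - 1) * (1 - e)) = 1"
    by (simp add: mult.assoc)
  then show ?thesis by blast
qed

lemma admissible_iff_unimodular:
  fixes a b :: "'a::comm_ring_1"
  shows "admissible (a, b) \<longleftrightarrow> (\<exists>u v. a * u + b * v = 1)"
proof
  assume "admissible (a, b)"
  then show "\<exists>u v. a * u + b * v = 1"
    unfolding admissible_def in_GL2_def by auto
next
  assume "\<exists>u v. a * u + b * v = 1"
  then obtain u v where uv: "a * u + b * v = 1" by blast
  \<comment> \<open>rows (a, b), (-v, u); the inverse has rows (u, -b), (v, a)\<close>
  have "in_GL2 a b (- v) u"
    unfolding in_GL2_def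
    by (rule exI[of _ u], rule exI[of _ "- b"], rule exI[of _ v], rule exI[of _ a])
      (use uv in \<open>simp add: algebra_simps\<close>)
  then show "admissible (a, b)"
    unfolding admissible_def by auto
qed

lemma free_pair_iff_admissible:
  fixes p :: "'a::{comm_ring_1, finite} \<times> 'a"
  shows "free_pair p \<longleftrightarrow> admissible p"
proof -
  obtain a b where p: "p = (a, b)" by fastforce
  have "free_pair (a, b) \<longleftrightarrow> (\<exists>u v. a * u + b * v = 1)"
  proof
    assume free: "free_pair (a, b)"
    have "r = 0" if "r * a = 0" and "r * b = 0" for r
    proof -
      have "(r * a, r * b) = (0, 0)"
        using that by simp
      then show "r = 0"
        using free unfolding free_pair_def fst_conv snd_conv by blast
    qed
    then show "\<exists>u v. a * u + b * v = 1"
      by (rule faithful_pair_unimodular)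
  next
    assume "\<exists>u v. a * u + b * v = 1"
    then obtain u v where uv: "a * u + b * v = 1" by blast
    show "free_pair (a, b)"
      unfolding free_pair_def
    proof (intro allI impI)
      fix r assume "(r * fst (a, b), r * snd (a, b)) = (0, 0)"
      then have "r * a = 0" and "r * b = 0" by simp_all
      have "r = r * (a * u + b * v)"
        using uv by simp
      also have "\<dots> = (r * a) * u + (r * b) * v"
        by (simp add: distrib_left mult.assoc)
      also have "\<dots> = 0"
        using \<open>r * a = 0\<close> \<open>r * b = 0\<close> by simp
      finally show "r = 0" .
    qed
  qed
  then show ?thesis
    unfolding p admissible_iff_unimodular .
qed

theorem mainTheorem14:
  shows "(free_cyclic_submodules :: ('a::{comm_ring_1, finite} \<times> 'a) set set) = projective_line"
  unfolding free_cyclic_submodules_def projective_line_def by (simp only: free_pair_iff_admissible)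

end
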